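(* Let $c\in\mathbb{R}^m\setminus\{0\}$ and write every $u\in\mathbb{R}^m$ as $u=(x,y)\in\mathbb{R}\times\mathbb{R}^{m-1}$ with $x=\langle u,c/\|c\|\rangle$ and $y\in c^\perp$ the orthogonal projection of $u$ onto $c^\perp$. Then the support function of $G(c)$ is $$h_{G(c)}(x,y)=\frac{\sqrt{x^2+\|y\|^2}}{\sqrt{2\pi}}\exp\left(\frac{-x^2\|c\|^2}{2(x^2+\|y\|^2)}\right)+\frac{x\|c\|}{2}\operatorname{erf}\left(\frac{x\|c\|}{\sqrt2\sqrt{x^2+\|y\|^2}}\right).$$
   Context: For a convex body $K\subset\mathbb{R}^m$ its support function is $h_K(u)=\sup\{\langle u,x\rangle : x\in K\}$. For an integrable random vector $X\in\mathbb{R}^m$, the Vitale zonoid $\mathbb{E}\underline{X}$ is the convex body with support function $h_{\mathbb{E}\underline{X}}(u)=\frac12\mathbb{E}|\langle u,X\rangle|$. For $c\in\mathbb{R}^m$, $G(c):=\mathbb{E}\underline{c+\xi}$ where $\xi\in\mathbb{R}^m$ is a standard Gaussian vector (mean $0$, identity covariance). The error function is $\operatorname{erf}(t)=\frac{2}{\sqrt\pi}\int_0^t e^{-s^2}\,ds$. *)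

theory Defs
  imports "HOL-Probability.Probability"
begin

definition erf :: "real \<Rightarrow> real" where
  "erf t = 2 / sqrt pi * (LBINT s=ereal 0..ereal t. exp (- (s\<^sup>2)))"

definition support_fun :: "'a::real_inner set \<Rightarrow> 'a \<Rightarrow> real" where
  "support_fun K u = (SUP x\<in>K. u \<bullet> x)"

definition std_gauss :: "'a::euclidean_space measure" where
  "std_gauss = density lborel
     (\<lambda>x. ennreal ((2 * pi) powr (- real DIM('a) / 2) * exp (- (norm x)\<^sup>2 / 2)))"

text \<open>The Vitale zonoid of a random vector X on a probability space M:
  the (unique) closed convex set whose support function is
  u \<mapsto> 1/2 E|<u,X>|, i.e. the intersection of the half-spaces
  {z. u\<bullet>z \<le> 1/2 E|<u,X>|}.\<close>
definition vitale_zonoid :: "'b measure \<Rightarrow> ('b \<Rightarrow> 'a::euclidean_space) \<Rightarrow> 'a set" where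
  "vitale_zonoid M X = {z. \<forall>u. u \<bullet> z \<le> (1/2) * (\<integral>\<omega>. \<bar>u \<bullet> X \<omega>\<bar> \<partial>M)}"

definition G :: "'a::euclidean_space \<Rightarrow> 'a set" where
  "G c = vitale_zonoid (std_gauss :: 'a measure) (\<lambda>\<xi>. c + \<xi>)"

end

theory Submission
  imports Defs "HOL-Real_Asymp.Real_Asymp"
begin

(* For integrable X the support function of the Vitale zonoid at u is (1/2) E|<u,X>|: every point
   of the zonoid is bounded by it by definition, and the point (1/2) E[sgn(<u,X>) X] lies in the
   zonoid and attains it. The standard Gaussian measure is the image of a product of independent
   standard normals under the basis coordinates, so <u,xi> is centred normal with standard deviation
   |u|, and E|<u,c + xi>| = E|a + |u| Z| with a = <u,c>. This absolute moment is computed with the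
   antiderivative (a/2) erf(t/(sqrt 2 s)) - s^2 phi_s(t) of (a + t) phi_s(t). Finally, in the
   coordinates of the statement, x |c| = <u,c> and x^2 + |y|^2 = |u|^2. *)

section \<open>The error function\<close>

lemma erf_has_real_derivative: "(erf has_real_derivative 2 / sqrt pi * exp (- (x\<^sup>2))) (at x)"
proof -
  define a where "a = min 0 x - 1"
  define b where "b = max 0 x + 1"
  have "((\<lambda>t. LBINT s=ereal 0..ereal t. exp (- (s\<^sup>2))) has_vector_derivative exp (- (x\<^sup>2)))
      (at x within {a..b})"
    by (rule interval_integral_FTC2) (auto simp: a_def b_def intro!: continuous_intros)
  also have "at x within {a..b} = at x"
    by (rule at_within_Icc_at) (auto simp: a_def b_def)
  finally show ?thesis
    unfolding erf_def[abs_def] has_real_derivative_iff_has_vector_derivative[symmetric]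
    by (rule DERIV_cmult)
qed

lemma erf_minus: "erf (- t) = - erf t"
proof -
  have "(LBINT s=ereal 0..ereal (-t). exp (- (s\<^sup>2))) = (LBINT s=ereal t..ereal 0. exp (- ((-s)\<^sup>2)))"
    by (subst interval_integral_reflect) simp
  also have "\<dots> = - (LBINT s=ereal 0..ereal t. exp (- (s\<^sup>2)))"
    by (subst interval_integral_endpoints_reverse) simp
  finally show ?thesis by (simp add: erf_def)
qed

lemma erf_tendsto_at_top: "(erf \<longlongrightarrow> 1) at_top"
proof -
  have gauss: "set_integrable lborel {0..} (\<lambda>x::real. exp (- x\<^sup>2))"
    "set_lebesgue_integral lborel {0..} (\<lambda>x::real. exp (- x\<^sup>2)) = sqrt pi / 2"
    using gaussian_moment_0
    by (simp_all add: set_integrable_def set_lebesgue_integral_def has_bochner_integral_iff)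
  have "((\<lambda>b. set_lebesgue_integral lborel {0..b} (\<lambda>x::real. exp (- x\<^sup>2))) \<longlongrightarrow> sqrt pi / 2) at_top"
    using tendsto_set_lebesgue_integral_at_top[OF _ gauss(1)] gauss(2) by simp
  then have "((\<lambda>b. 2 / sqrt pi * set_lebesgue_integral lborel {0..b} (\<lambda>x::real. exp (- x\<^sup>2)))
      \<longlongrightarrow> 2 / sqrt pi * (sqrt pi / 2)) at_top"
    by (intro tendsto_mult tendsto_const)
  then have "((\<lambda>b. 2 / sqrt pi * set_lebesgue_integral lborel {0..b} (\<lambda>x::real. exp (- x\<^sup>2))) \<longlongrightarrow> 1) at_top"
    by simp
  then show ?thesis
    by (rule Lim_transform_eventually)
      (use eventually_ge_at_top[of "0::real"] in \<open>eventually_elim, simp add: erf_def interval_integral_Icc\<close>)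
qed

lemma erf_tendsto_at_bot: "(erf \<longlongrightarrow> -1) at_bot"
proof -
  have "((\<lambda>t. - erf (- t)) \<longlongrightarrow> -1) at_bot"
    by (intro tendsto_minus filterlim_compose[OF erf_tendsto_at_top] filterlim_uminus_at_top_at_bot)
  then show ?thesis by (simp add: erf_minus)
qed

section \<open>The absolute first moment of a shifted centred normal distribution\<close>

lemma normal_density_centred:
  "s > 0 \<Longrightarrow> normal_density 0 s t = exp (- t\<^sup>2 / (2 * s\<^sup>2)) / (sqrt 2 * sqrt pi * s)"
  by (simp add: normal_density_def real_sqrt_mult)

definition normal_abs_primitive :: "real \<Rightarrow> real \<Rightarrow> real \<Rightarrow> real" where
  "normal_abs_primitive s a t = a / 2 * erf (t / (sqrt 2 * s)) - s\<^sup>2 * normal_density 0 s t"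

lemma normal_abs_primitive_has_real_derivative:
  assumes "s > 0"
  shows "(normal_abs_primitive s a has_real_derivative (a + t) * normal_density 0 s t) (at t)"
proof -
  have "(normal_abs_primitive s a has_real_derivative
      a / 2 * (2 / sqrt pi * exp (- ((t / (sqrt 2 * s))\<^sup>2)) * (1 / (sqrt 2 * s)))
      - s\<^sup>2 * (exp (- t\<^sup>2 / (2 * s\<^sup>2)) * (- (2 * t) / (2 * s\<^sup>2)) / (sqrt 2 * sqrt pi * s))) (at t)"
    unfolding normal_abs_primitive_def[abs_def] normal_density_centred[OF assms]
    using assms
    by (intro DERIV_diff DERIV_cmult DERIV_chain2[OF erf_has_real_derivative])
      (auto intro!: derivative_eq_intros simp: power2_eq_square)
  then show ?thesis
    by (rule DERIV_cong) (use assms in \<open>simp add: normal_density_centred field_simps\<close>)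
qed

lemma normal_abs_primitive_tendsto_at_top:
  assumes "s > 0"
  shows "(normal_abs_primitive s a \<longlongrightarrow> a / 2) at_top"
proof -
  have "((\<lambda>t. a / 2 * erf (t / (sqrt 2 * s)) - s\<^sup>2 * normal_density 0 s t) \<longlongrightarrow> a / 2 * 1 - s\<^sup>2 * 0) at_top"
    using assms unfolding normal_density_def
    by (intro tendsto_intros filterlim_compose[OF erf_tendsto_at_top]) real_asymp+
  then show ?thesis by (simp add: normal_abs_primitive_def[abs_def])
qed

lemma normal_abs_primitive_tendsto_at_bot:
  assumes "s > 0"
  shows "(normal_abs_primitive s a \<longlongrightarrow> - a / 2) at_bot"
proof -
  have "((\<lambda>t. a / 2 * erf (t / (sqrt 2 * s)) - s\<^sup>2 * normal_density 0 s t) \<longlongrightarrow> a / 2 * -1 - s\<^sup>2 * 0) at_bot"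
    using assms unfolding normal_density_def
    by (intro tendsto_intros filterlim_compose[OF erf_tendsto_at_bot]) real_asymp+
  then show ?thesis by (simp add: normal_abs_primitive_def[abs_def])
qed

lemma normal_abs_integral_upper_half:
  assumes "s > 0"
  shows "set_integrable lborel (einterval (ereal (- a)) \<infinity>) (\<lambda>t. (a + t) * normal_density 0 s t)"
    and "(LBINT t=ereal (- a)..\<infinity>. (a + t) * normal_density 0 s t) = a / 2 - normal_abs_primitive s a (- a)"
proof -
  note FTC = interval_integral_FTC_nonneg[where a="ereal (- a)" and b=\<infinity> and F="normal_abs_primitive s a"
      and f="\<lambda>t. (a + t) * normal_density 0 s t" and A="normal_abs_primitive s a (- a)" and B="a / 2"]
  note deriv = normal_abs_primitive_has_real_derivative[OF assms]
  have cont: "isCont (\<lambda>t. (a + t) * normal_density 0 s t) t" for t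
    unfolding normal_density_def by (intro continuous_intros) (use assms in auto)
  have nonneg: "AE t in lborel. ereal (- a) < ereal t \<longrightarrow> ereal t < \<infinity> \<longrightarrow> 0 \<le> (a + t) * normal_density 0 s t"
    by auto
  have left: "((normal_abs_primitive s a \<circ> real_of_ereal) \<longlongrightarrow> normal_abs_primitive s a (- a)) (at_right (ereal (- a)))"
    unfolding ereal_tendsto_simps1
    using DERIV_isCont[OF deriv] by (simp add: isCont_def filterlim_at_split)
  have right: "((normal_abs_primitive s a \<circ> real_of_ereal) \<longlongrightarrow> a / 2) (at_left \<infinity>)"
    unfolding ereal_tendsto_simps1 by (rule normal_abs_primitive_tendsto_at_top[OF assms])
  show "set_integrable lborel (einterval (ereal (- a)) \<infinity>) (\<lambda>t. (a + t) * normal_density 0 s t)"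
    using FTC(1)[OF _ deriv cont nonneg left right] by simp
  show "(LBINT t=ereal (- a)..\<infinity>. (a + t) * normal_density 0 s t) = a / 2 - normal_abs_primitive s a (- a)"
    using FTC(2)[OF _ deriv cont nonneg left right] by simp
qed

lemma normal_abs_integral_lower_half:
  assumes "s > 0"
  shows "set_integrable lborel (einterval (-\<infinity>) (ereal (- a))) (\<lambda>t. - (a + t) * normal_density 0 s t)"
    and "(LBINT t=-\<infinity>..ereal (- a). - (a + t) * normal_density 0 s t) = - normal_abs_primitive s a (- a) - a / 2"
proof -
  note FTC = interval_integral_FTC_nonneg[where a="-\<infinity>" and b="ereal (- a)" and F="\<lambda>t. - normal_abs_primitive s a t"
      and f="\<lambda>t. - (a + t) * normal_density 0 s t" and A="a / 2" and B="- normal_abs_primitive s a (- a)"]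
  have deriv: "((\<lambda>t. - normal_abs_primitive s a t) has_real_derivative - (a + t) * normal_density 0 s t) (at t)" for t
    using DERIV_minus[OF normal_abs_primitive_has_real_derivative[OF assms]] by (simp only: minus_mult_left)
  have cont: "isCont (\<lambda>t. - (a + t) * normal_density 0 s t) t" for t
    unfolding normal_density_def by (intro continuous_intros) (use assms in auto)
  have nonneg: "AE t in lborel. -\<infinity> < ereal t \<longrightarrow> ereal t < ereal (- a) \<longrightarrow> 0 \<le> - (a + t) * normal_density 0 s t"
    by (auto intro!: mult_nonneg_nonneg)
  have left: "(((\<lambda>t. - normal_abs_primitive s a t) \<circ> real_of_ereal) \<longlongrightarrow> a / 2) (at_right (-\<infinity>))"
    unfolding ereal_tendsto_simps1
    using tendsto_minus[OF normal_abs_primitive_tendsto_at_bot[OF assms]] by simp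
  have right: "(((\<lambda>t. - normal_abs_primitive s a t) \<circ> real_of_ereal) \<longlongrightarrow> - normal_abs_primitive s a (- a))
      (at_left (ereal (- a)))"
    unfolding ereal_tendsto_simps1
    using DERIV_isCont[OF deriv] by (simp add: isCont_def filterlim_at_split)
  show "set_integrable lborel (einterval (-\<infinity>) (ereal (- a))) (\<lambda>t. - (a + t) * normal_density 0 s t)"
    using FTC(1)[OF _ deriv cont nonneg left right] by simp
  show "(LBINT t=-\<infinity>..ereal (- a). - (a + t) * normal_density 0 s t) = - normal_abs_primitive s a (- a) - a / 2"
    using FTC(2)[OF _ deriv cont nonneg left right] by simp
qed

lemma integral_normal_density_abs_shift:
  assumes "s > 0"
  shows "(\<integral>t. normal_density 0 s t * \<bar>a + t\<bar> \<partial>lborel)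
      = 2 * s / sqrt (2 * pi) * exp (- a\<^sup>2 / (2 * s\<^sup>2)) + a * erf (a / (sqrt 2 * s))"
proof -
  let ?upper = "einterval (ereal (- a)) \<infinity>" and ?lower = "einterval (-\<infinity>) (ereal (- a))"
  have split: "normal_density 0 s t * \<bar>a + t\<bar> = indicator ?upper t * ((a + t) * normal_density 0 s t)
      + indicator ?lower t * (- (a + t) * normal_density 0 s t)" for t
    by (auto simp: indicator_def einterval_iff abs_if)
  have "(\<integral>t. normal_density 0 s t * \<bar>a + t\<bar> \<partial>lborel)
      = (LBINT t=ereal (- a)..\<infinity>. (a + t) * normal_density 0 s t)
        + (LBINT t=-\<infinity>..ereal (- a). - (a + t) * normal_density 0 s t)"
    unfolding split
    using normal_abs_integral_upper_half(1)[OF assms] normal_abs_integral_lower_half(1)[OF assms]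
    by (simp add: interval_lebesgue_integral_def set_lebesgue_integral_def set_integrable_def)
  also have "\<dots> = - 2 * normal_abs_primitive s a (- a)"
    using normal_abs_integral_upper_half(2)[OF assms] normal_abs_integral_lower_half(2)[OF assms] by simp
  also have "\<dots> = 2 * s / sqrt (2 * pi) * exp (- a\<^sup>2 / (2 * s\<^sup>2)) + a * erf (a / (sqrt 2 * s))"
    using assms
    by (simp add: normal_abs_primitive_def normal_density_centred erf_minus real_sqrt_mult field_simps power2_eq_square)
  finally show ?thesis .
qed

section \<open>The support function of a Vitale zonoid\<close>

lemma vitale_zonoid_attains_bound:
  fixes X :: "'b \<Rightarrow> 'a::euclidean_space"
  assumes int: "integrable M X"
  obtains z where "z \<in> vitale_zonoid M X" and "u \<bullet> z = 1/2 * (\<integral>\<omega>. \<bar>u \<bullet> X \<omega>\<bar> \<partial>M)"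
proof -
  have [measurable]: "X \<in> borel_measurable M"
    using int by (rule borel_measurable_integrable)
  have int_sgn: "integrable M (\<lambda>\<omega>. sgn (u \<bullet> X \<omega>) *\<^sub>R X \<omega>)"
    by (rule Bochner_Integration.integrable_bound[OF integrable_norm[OF int]]) (auto simp: sgn_if)
  define z where "z = (1/2) *\<^sub>R (\<integral>\<omega>. sgn (u \<bullet> X \<omega>) *\<^sub>R X \<omega> \<partial>M)"
  have inner_z: "v \<bullet> z = 1/2 * (\<integral>\<omega>. sgn (u \<bullet> X \<omega>) * (v \<bullet> X \<omega>) \<partial>M)" for v
    unfolding z_def using integral_inner_right[OF int_sgn, of v] by simp
  have "z \<in> vitale_zonoid M X"
    unfolding vitale_zonoid_def
  proof (intro CollectI allI)
    fix v :: 'a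
    have "(\<integral>\<omega>. sgn (u \<bullet> X \<omega>) * (v \<bullet> X \<omega>) \<partial>M) \<le> (\<integral>\<omega>. \<bar>v \<bullet> X \<omega>\<bar> \<partial>M)"
      using integrable_inner_right[OF int_sgn, of v] integrable_abs[OF integrable_inner_right[OF int, of v]]
      by (intro integral_mono) (auto simp: sgn_if)
    then show "v \<bullet> z \<le> 1/2 * (\<integral>\<omega>. \<bar>v \<bullet> X \<omega>\<bar> \<partial>M)"
      by (simp add: inner_z)
  qed
  moreover have "u \<bullet> z = 1/2 * (\<integral>\<omega>. \<bar>u \<bullet> X \<omega>\<bar> \<partial>M)"
  proof -
    have "sgn (u \<bullet> X \<omega>) * (u \<bullet> X \<omega>) = \<bar>u \<bullet> X \<omega>\<bar>" for \<omega>
      by (auto simp: sgn_if)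
    then show ?thesis
      by (simp add: inner_z)
  qed
  ultimately show thesis
    by (rule that)
qed

lemma support_fun_vitale_zonoid:
  fixes X :: "'b \<Rightarrow> 'a::euclidean_space"
  assumes "integrable M X"
  shows "support_fun (vitale_zonoid M X) u = 1/2 * (\<integral>\<omega>. \<bar>u \<bullet> X \<omega>\<bar> \<partial>M)"
proof -
  obtain z where z: "z \<in> vitale_zonoid M X" "u \<bullet> z = 1/2 * (\<integral>\<omega>. \<bar>u \<bullet> X \<omega>\<bar> \<partial>M)"
    using vitale_zonoid_attains_bound[OF assms] .
  show ?thesis
    unfolding support_fun_def
  proof (rule cSup_eq_maximum)
    show "1/2 * (\<integral>\<omega>. \<bar>u \<bullet> X \<omega>\<bar> \<partial>M) \<in> (\<lambda>z. u \<bullet> z) ` vitale_zonoid M X"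
      using z by force
  qed (auto simp: vitale_zonoid_def)
qed

section \<open>Linear functionals of the standard Gaussian measure\<close>

abbreviation std_normal_measure :: "real measure" where
  "std_normal_measure \<equiv> density lborel (\<lambda>x. ennreal (std_normal_density x))"

lemma prob_space_std_normal_measure: "prob_space std_normal_measure"
  by (rule prob_space_normal_density) simp

lemma indicator_PiE_eq_prod:
  assumes "x \<in> PiE I (\<lambda>_. UNIV)" and "finite I"
  shows "(indicator (PiE I A) x :: ennreal) = (\<Prod>i\<in>I. indicator (A i) (x i))"
proof (cases "x \<in> PiE I A")
  case False
  then obtain i where "i \<in> I" "x i \<notin> A i"
    using assms(1) by (auto simp: PiE_iff)
  with False assms(2) show ?thesis
    by (simp add: prod_zero[OF _ bexI[of _ i]])
qed (auto simp: PiE_iff)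

lemma density_PiM_lborel_std_normal:
  fixes I :: "'i set"
  assumes fin: "finite I"
  shows "density (PiM I (\<lambda>_. lborel)) (\<lambda>f. ennreal (\<Prod>i\<in>I. std_normal_density (f i)))
    = PiM I (\<lambda>_. std_normal_measure)"
proof -
  interpret N: product_sigma_finite "\<lambda>_::'i. std_normal_measure"
    by (simp add: product_sigma_finite_def prob_space_imp_sigma_finite prob_space_std_normal_measure)
  interpret L: product_sigma_finite "\<lambda>_::'i. lborel::real measure"
    by (simp add: product_sigma_finite_def lborel.sigma_finite_measure_axioms)
  show ?thesis
  proof (rule N.PiM_eqI[OF fin])
    show "sets (density (PiM I (\<lambda>_. lborel)) (\<lambda>f. ennreal (\<Prod>i\<in>I. std_normal_density (f i))))
      = sets (PiM I (\<lambda>_. std_normal_measure))"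
      by (simp only: sets_density) (rule sets_PiM_cong, auto)
    fix A assume "\<And>i. i \<in> I \<Longrightarrow> A i \<in> sets std_normal_measure"
    then have A: "\<And>i. i \<in> I \<Longrightarrow> A i \<in> sets borel"
      by simp
    then have "PiE I A \<in> sets (PiM I (\<lambda>_. lborel))"
      by (intro sets_PiM_I_finite fin) auto
    then have "emeasure (density (PiM I (\<lambda>_. lborel)) (\<lambda>f. ennreal (\<Prod>i\<in>I. std_normal_density (f i)))) (PiE I A)
       = (\<integral>\<^sup>+ f. ennreal (\<Prod>i\<in>I. std_normal_density (f i)) * indicator (PiE I A) f \<partial>PiM I (\<lambda>_. lborel))"
      by (subst emeasure_density) auto
    also have "\<dots> = (\<integral>\<^sup>+ f. (\<Prod>i\<in>I. ennreal (std_normal_density (f i)) * indicator (A i) (f i)) \<partial>PiM I (\<lambda>_. lborel))"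
      by (intro nn_integral_cong)
        (simp add: space_PiM indicator_PiE_eq_prod[OF _ fin] prod.distrib prod_ennreal)
    also have "\<dots> = (\<Prod>i\<in>I. \<integral>\<^sup>+ t. ennreal (std_normal_density t) * indicator (A i) t \<partial>lborel)"
      using A by (intro L.product_nn_integral_prod fin) auto
    also have "\<dots> = (\<Prod>i\<in>I. emeasure std_normal_measure (A i))"
      using A by (intro prod.cong refl) (simp add: emeasure_density)
    finally show "emeasure (density (PiM I (\<lambda>_. lborel)) (\<lambda>f. ennreal (\<Prod>i\<in>I. std_normal_density (f i)))) (PiE I A)
       = (\<Prod>i\<in>I. emeasure std_normal_measure (A i))" .
  qed
qed

lemma norm_sum_Basis_power2:
  fixes f :: "'a::euclidean_space \<Rightarrow> real"
  shows "(norm (\<Sum>b\<in>Basis. f b *\<^sub>R b))\<^sup>2 = (\<Sum>b\<in>Basis. (f b)\<^sup>2)"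
proof -
  let ?v = "\<Sum>b\<in>Basis. f b *\<^sub>R b"
  have coord: "?v \<bullet> b' = f b'" if "b' \<in> (Basis::'a set)" for b'
    using that by (simp add: inner_sum_left inner_Basis if_distrib[of "\<lambda>x. _ * x"] sum.delta cong: if_cong)
  have "(norm ?v)\<^sup>2 = (\<Sum>b\<in>Basis. (?v \<bullet> b) * (?v \<bullet> b))"
    by (simp only: power2_norm_eq_inner euclidean_inner[of ?v ?v])
  also have "\<dots> = (\<Sum>b\<in>Basis. (f b)\<^sup>2)"
    by (rule sum.cong) (simp_all add: coord power2_eq_square)
  finally show ?thesis .
qed

lemma std_gauss_density_eq_prod:
  fixes f :: "'a::euclidean_space \<Rightarrow> real"
  shows "(2 * pi) powr (- real DIM('a) / 2) * exp (- (norm (\<Sum>b\<in>Basis. f b *\<^sub>R b))\<^sup>2 / 2)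
       = (\<Prod>b\<in>Basis. std_normal_density (f b))"
proof -
  have "(1 / sqrt (2 * pi)) ^ DIM('a) = ((2 * pi) powr (- 1 / 2)) ^ DIM('a)"
    by (simp add: powr_minus_divide powr_half_sqrt[symmetric])
  also have "\<dots> = (2 * pi) powr (- real DIM('a) / 2)"
    by (subst powr_power) auto
  finally have const: "(1 / sqrt (2 * pi)) ^ DIM('a) = (2 * pi) powr (- real DIM('a) / 2)" .
  have "(\<Sum>b\<in>(Basis::'a set). - (f b)\<^sup>2 / 2) = - (norm (\<Sum>b\<in>Basis. f b *\<^sub>R b))\<^sup>2 / 2"
    by (simp add: norm_sum_Basis_power2 sum_divide_distrib[symmetric] sum_negf)
  moreover have "(\<Prod>b\<in>(Basis::'a set). std_normal_density (f b))
      = (1 / sqrt (2 * pi)) ^ DIM('a) * exp (\<Sum>b\<in>Basis. - (f b)\<^sup>2 / 2)"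
    by (simp only: std_normal_density_def prod.distrib prod_constant exp_sum[OF finite_Basis])
  ultimately show ?thesis
    by (simp only: const)
qed

lemma std_gauss_eq_distr_PiM:
  "(std_gauss :: 'a::euclidean_space measure)
    = distr (PiM (Basis::'a set) (\<lambda>_. std_normal_measure)) borel (\<lambda>f. \<Sum>b\<in>Basis. f b *\<^sub>R b)"
proof -
  let ?g = "\<lambda>x::'a. ennreal ((2 * pi) powr (- real DIM('a) / 2) * exp (- (norm x)\<^sup>2 / 2))"
  let ?P = "PiM (Basis::'a set) (\<lambda>_. lborel::real measure)"
  let ?sum = "\<lambda>f. \<Sum>b\<in>(Basis::'a set). f b *\<^sub>R b"
  have "(std_gauss :: 'a measure) = density (distr ?P borel ?sum) ?g"
    unfolding std_gauss_def by (subst lborel_eq) rule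
  also have "\<dots> = distr (density ?P (\<lambda>f. ?g (?sum f))) borel ?sum"
    by (rule density_distr) auto
  also have "(\<lambda>f. ?g (?sum f)) = (\<lambda>f. ennreal (\<Prod>b\<in>Basis. std_normal_density (f b)))"
    by (intro ext arg_cong[where f=ennreal] std_gauss_density_eq_prod)
  also have "density ?P (\<lambda>f. ennreal (\<Prod>b\<in>Basis. std_normal_density (f b))) = PiM Basis (\<lambda>_. std_normal_measure)"
    by (simp add: density_PiM_lborel_std_normal)
  finally show ?thesis .
qed

lemma indep_vars_PiM_components:
  assumes "\<And>i. i \<in> I \<Longrightarrow> prob_space (M i)" and "I \<noteq> {}"
  shows "prob_space.indep_vars (PiM I M) M (\<lambda>i \<omega>. \<omega> i) I"
proof -
  interpret P: prob_space "PiM I M"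
    using assms(1) by (rule prob_space_PiM)
  have "distr (PiM I M) (PiM I M) (\<lambda>\<omega>. restrict \<omega> I) = distr (PiM I M) (PiM I M) (\<lambda>\<omega>. \<omega>)"
    by (rule distr_cong) (auto simp: space_PiM)
  moreover have "(\<Pi>\<^sub>M i\<in>I. distr (PiM I M) (M i) (\<lambda>\<omega>. \<omega> i)) = PiM I M"
    by (rule PiM_cong) (auto simp: distr_PiM_component assms(1))
  ultimately show ?thesis
    using assms(2) by (subst P.indep_vars_iff_distr_eq_PiM') auto
qed

lemma weighted_sum_std_normal_distributed:
  assumes "finite I" and "I \<noteq> {}" and "I \<subseteq> J" and "\<And>i. i \<in> I \<Longrightarrow> w i \<noteq> 0"
  shows "distributed (PiM J (\<lambda>_. std_normal_measure)) lborel (\<lambda>f. \<Sum>i\<in>I. w i * f i)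
    (\<lambda>t. ennreal (normal_density 0 (sqrt (\<Sum>i\<in>I. (w i)\<^sup>2)) t))"
proof -
  interpret prob_space "PiM J (\<lambda>_. std_normal_measure)"
    by (rule prob_space_PiM) (rule prob_space_std_normal_measure)
  have "indep_vars (\<lambda>_. std_normal_measure) (\<lambda>i f. f i) J"
    using assms(2,3) by (intro indep_vars_PiM_components prob_space_std_normal_measure) auto
  then have "indep_vars (\<lambda>_. std_normal_measure) (\<lambda>i f. f i) I"
    using assms(3) by (rule indep_vars_subset)
  then have indep: "indep_vars (\<lambda>_. borel) (\<lambda>i f. w i * f i) I"
    by (rule indep_vars_compose2[where N="\<lambda>_. borel"]) simp
  have component: "distributed (PiM J (\<lambda>_. std_normal_measure)) lborel (\<lambda>f. f i) std_normal_density"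
    if "i \<in> I" for i
  proof -
    have "distr (PiM J (\<lambda>_. std_normal_measure)) lborel (\<lambda>f. f i)
        = distr (PiM J (\<lambda>_. std_normal_measure)) std_normal_measure (\<lambda>f. f i)"
      by (rule distr_cong) auto
    also have "\<dots> = std_normal_measure"
      using prob_space_std_normal_measure that assms(3) by (intro distr_PiM_component) auto
    finally show ?thesis
      unfolding distributed_def using that assms(3) by auto
  qed
  have scaled: "distributed (PiM J (\<lambda>_. std_normal_measure)) lborel (\<lambda>f. w i * f i)
      (normal_density 0 \<bar>w i\<bar>)" if "i \<in> I" for i
  proof -
    have "distributed (PiM J (\<lambda>_. std_normal_measure)) lborel (\<lambda>f. 0 + w i * f i)
        (normal_density (0 + w i * 0) (\<bar>w i\<bar> * 1))"
      by (rule normal_density_affine[OF component[OF that]]) (use assms(4) that in auto)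
    then show ?thesis by simp
  qed
  have "distributed (PiM J (\<lambda>_. std_normal_measure)) lborel (\<lambda>f. \<Sum>i\<in>I. w i * f i)
      (normal_density (\<Sum>i\<in>I. 0) (sqrt (\<Sum>i\<in>I. \<bar>w i\<bar>\<^sup>2)))"
    by (rule sum_indep_normal[OF assms(1,2) indep _ scaled]) (use assms(4) in auto)
  moreover have "(\<Sum>i\<in>I. \<bar>w i\<bar>\<^sup>2) = (\<Sum>i\<in>I. (w i)\<^sup>2)"
    by (simp only: power2_abs)
  ultimately show ?thesis
    by (simp only: sum.neutral_const)
qed

lemma sets_std_gauss [measurable_cong, simp]: "sets (std_gauss :: 'a::euclidean_space measure) = sets borel"
  by (simp add: std_gauss_def)

lemma prob_space_std_gauss: "prob_space (std_gauss :: 'a::euclidean_space measure)"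
  unfolding std_gauss_eq_distr_PiM
  by (rule prob_space.prob_space_distr[OF prob_space_PiM[OF prob_space_std_normal_measure]]) measurable

lemma std_gauss_inner_distributed:
  fixes u :: "'a::euclidean_space"
  assumes "u \<noteq> 0"
  shows "distributed std_gauss lborel (\<lambda>\<xi>. u \<bullet> \<xi>) (\<lambda>t. ennreal (normal_density 0 (norm u) t))"
proof -
  (* Basis directions orthogonal to u are left out: a zero coefficient would give a degenerate
     normal summand, which has no density. *)
  define I where "I = {b\<in>(Basis::'a set). u \<bullet> b \<noteq> 0}"
  let ?P = "PiM (Basis::'a set) (\<lambda>_. std_normal_measure)"
  have I: "finite I" "I \<subseteq> Basis"
    by (auto simp: I_def)
  have "I \<noteq> {}"
    using assms euclidean_all_zero_iff[of u] by (auto simp: I_def)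
  then have "distributed ?P lborel (\<lambda>f. \<Sum>b\<in>I. (u \<bullet> b) * f b)
      (\<lambda>t. ennreal (normal_density 0 (sqrt (\<Sum>b\<in>I. (u \<bullet> b)\<^sup>2)) t))"
    by (rule weighted_sum_std_normal_distributed[OF I(1) _ I(2)]) (simp add: I_def)
  moreover have "(\<Sum>b\<in>I. (u \<bullet> b)\<^sup>2) = (\<Sum>b\<in>Basis. (u \<bullet> b) * (u \<bullet> b))"
    by (rule sum.mono_neutral_cong_left) (auto simp: I_def power2_eq_square)
  ultimately have sum_distributed: "distributed ?P lborel (\<lambda>f. \<Sum>b\<in>I. (u \<bullet> b) * f b)
      (\<lambda>t. ennreal (normal_density 0 (norm u) t))"
    by (simp add: norm_eq_sqrt_inner euclidean_inner[of u u])
  have "distr std_gauss lborel (\<lambda>\<xi>. u \<bullet> \<xi>) = distr ?P lborel (\<lambda>f. u \<bullet> (\<Sum>b\<in>Basis. f b *\<^sub>R b))"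
    unfolding std_gauss_eq_distr_PiM by (subst distr_distr) (auto simp: comp_def)
  also have "\<dots> = distr ?P lborel (\<lambda>f. \<Sum>b\<in>I. (u \<bullet> b) * f b)"
  proof (rule distr_cong)
    show "u \<bullet> (\<Sum>b\<in>Basis. f b *\<^sub>R b) = (\<Sum>b\<in>I. (u \<bullet> b) * f b)" for f :: "'a \<Rightarrow> real"
      unfolding I_def inner_sum_right
      by (rule sum.mono_neutral_cong_right) (auto simp: mult.commute)
  qed auto
  also have "\<dots> = density lborel (\<lambda>t. ennreal (normal_density 0 (norm u) t))"
    using sum_distributed by (simp add: distributed_def)
  finally show ?thesis
    unfolding distributed_def by auto
qed

lemma integrable_std_gauss_id: "integrable (std_gauss :: 'a::euclidean_space measure) (\<lambda>\<xi>. \<xi>)"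
proof -
  have "integrable std_gauss (\<lambda>\<xi>::'a. b \<bullet> \<xi>)" if "b \<in> Basis" for b :: 'a
  proof (rule distributed_integrable_var)
    show "distributed std_gauss lborel (\<lambda>\<xi>::'a. b \<bullet> \<xi>) (\<lambda>t. ennreal (std_normal_density t))"
      using std_gauss_inner_distributed[of b] that by (auto simp: nonzero_Basis)
    show "integrable lborel (\<lambda>x. std_normal_density x * x)"
      using integrable_std_normal_moment[of 1] by simp
  qed simp
  then have "integrable std_gauss (\<lambda>\<xi>::'a. \<Sum>b\<in>Basis. (b \<bullet> \<xi>) *\<^sub>R b)"
    by (intro Bochner_Integration.integrable_sum Bochner_Integration.integrable_scaleR_left)
  then show ?thesis
    by (simp add: inner_commute euclidean_representation)
qed


lemma orthogonal_decomposition_norm_power2: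
  fixes u e :: "'a::real_inner"
  assumes "norm e = 1"
  shows "(u \<bullet> e)\<^sup>2 + (norm (u - (u \<bullet> e) *\<^sub>R e))\<^sup>2 = (norm u)\<^sup>2"
proof -
  have "e \<bullet> e = 1"
    using assms by (simp add: power2_norm_eq_inner[symmetric])
  then show ?thesis
    unfolding power2_norm_eq_inner
    by (simp add: inner_diff_left inner_diff_right inner_commute power2_eq_square algebra_simps)
qed

theorem proposition2p8:
  fixes c u :: "'a::euclidean_space"
  assumes "c \<noteq> 0"
  defines "x \<equiv> u \<bullet> (c /\<^sub>R norm c)"
  defines "y \<equiv> u - x *\<^sub>R (c /\<^sub>R norm c)"
  shows "support_fun (G c) u =
     sqrt (x\<^sup>2 + (norm y)\<^sup>2) / sqrt (2 * pi)
       * exp (- (x\<^sup>2 * (norm c)\<^sup>2) / (2 * (x\<^sup>2 + (norm y)\<^sup>2)))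
     + x * norm c / 2 * erf (x * norm c / (sqrt 2 * sqrt (x\<^sup>2 + (norm y)\<^sup>2)))"
proof -
  interpret prob_space "std_gauss :: 'a measure"
    by (rule prob_space_std_gauss)
  have "integrable std_gauss (\<lambda>\<xi>::'a. c + \<xi>)"
    using integrable_const integrable_std_gauss_id by (rule Bochner_Integration.integrable_add)
  then have support: "support_fun (G c) u = 1/2 * (\<integral>\<xi>. \<bar>u \<bullet> c + u \<bullet> \<xi>\<bar> \<partial>std_gauss)"
    unfolding G_def by (simp add: support_fun_vitale_zonoid inner_add_right)
  have xc: "x * norm c = u \<bullet> c"
    using assms(1) by (simp add: x_def)
  have norm_u: "x\<^sup>2 + (norm y)\<^sup>2 = (norm u)\<^sup>2"
    using orthogonal_decomposition_norm_power2[of "c /\<^sub>R norm c" u] assms(1) by (simp add: x_def y_def)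
  show ?thesis
  proof (cases "u = 0")
    case True
    then show ?thesis
      using support by (simp add: x_def y_def)
  next
    case False
    have "(\<integral>\<xi>. \<bar>u \<bullet> c + u \<bullet> \<xi>\<bar> \<partial>std_gauss) = (\<integral>t. normal_density 0 (norm u) t * \<bar>u \<bullet> c + t\<bar> \<partial>lborel)"
      by (rule distributed_integral[OF std_gauss_inner_distributed[OF False], symmetric]) auto
    also have "\<dots> = 2 * norm u / sqrt (2 * pi) * exp (- (u \<bullet> c)\<^sup>2 / (2 * (norm u)\<^sup>2))
        + (u \<bullet> c) * erf ((u \<bullet> c) / (sqrt 2 * norm u))"
      using False by (intro integral_normal_density_abs_shift) simp
    finally show ?thesis
      unfolding support norm_u power_mult_distrib[symmetric] xc
      by simp
  qed
qed

end
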